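(* Let $A\in\mathrm{SGL}_n(\mathbb{F}_2)$ and let $\mathbf{x}_1,\ldots,\mathbf{x}_r\in\mathbb{F}_2^n$ be linearly independent, $2\le r\le n$, such that $[\mathbf{x}_i^{\top}A^{-1}\mathbf{x}_j]_{i,j=1}^r$ has rank one and trace zero, and $\mathbf{x}_i^{\top}A^{-1}\mathbf{x}_j=0$ for some $i,j$. (i) For every even $k\in\{2,\ldots,r-1\}$ there exist linearly independent $\mathbf{y}_1,\ldots,\mathbf{y}_r\in\mathbb{F}_2^n$ and a permutation matrix $Q\in GL_r(\mathbb{F}_2)$ such that $\sum_{i=1}^r\mathbf{x}_i\mathbf{x}_i^{\top}=\sum_{i=1}^r\mathbf{y}_i\mathbf{y}_i^{\top}$, $\sum_{i=1}^r\mathbf{x}_i=\sum_{i=1}^r\mathbf{y}_i$, and $[\mathbf{y}_i^{\top}A^{-1}\mathbf{y}_j]_{i,j=1}^r=Q\begin{pmatrix}J_{k\times k}&O\\O&O\end{pmatrix}Q^{\top}$. (ii) If $\sum_{i=1}^r\mathbf{x}_i\mathbf{x}_i^{\top}=\sum_{i=1}^r\mathbf{y}_i\mathbf{y}_i^{\top}$ for some $\mathbf{y}_1,\ldots,\mathbf{y}_r\in\mathbb{F}_2^n$, then $[\mathbf{y}_i^{\top}A^{-1}\mathbf{y}_j]_{i,j=1}^r$ has rank one and trace zero, and $\mathbf{y}_{i'}^{\top}A^{-1}\mathbf{y}_{j'}=0$ for some $i',j'$.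
   Context: $\mathrm{SGL}_n(\mathbb{F}_2)$ is the set of invertible symmetric $n\times n$ matrices over the binary field $\mathbb{F}_2$; $J_{k\times k}$ is the all-ones matrix. *)

theory Defs
  imports "HOL-Library.Z2" "Jordan_Normal_Form.DL_Rank" "HOL-Combinatorics.Permutations"
begin

text \<open>The binary field F_2 is the type bit. Vectors in F_2^n are
  bit vec in carrier_vec n, n x n matrices are bit mat in carrier_mat n n.\<close>

definition inv_of :: "nat \<Rightarrow> bit mat \<Rightarrow> bit mat" where
  "inv_of n A = (SOME B. B \<in> carrier_mat n n \<and> A * B = 1\<^sub>m n \<and> B * A = 1\<^sub>m n)"

definition SGL :: "nat \<Rightarrow> bit mat set" where
  "SGL n = {A. A \<in> carrier_mat n n \<and> transpose_mat A = A \<and> invertible_mat A}"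

definition lin_indep_family :: "nat \<Rightarrow> nat \<Rightarrow> (nat \<Rightarrow> bit vec) \<Rightarrow> bool" where
  "lin_indep_family n r x \<longleftrightarrow> (\<forall>i<r. x i \<in> carrier_vec n) \<and> inj_on x {..<r} \<and>
     \<not> module.lin_dep (class_ring :: bit ring) (module_vec TYPE(bit) n) (x ` {..<r})"

definition gram :: "nat \<Rightarrow> bit mat \<Rightarrow> nat \<Rightarrow> (nat \<Rightarrow> bit vec) \<Rightarrow> bit mat" where
  "gram n A r x = mat r r (\<lambda>(i,j). x i \<bullet> (inv_of n A *\<^sub>v x j))"

definition outer_sum :: "nat \<Rightarrow> nat \<Rightarrow> (nat \<Rightarrow> bit vec) \<Rightarrow> bit mat" where
  "outer_sum n r x = mat n n (\<lambda>(a,b). \<Sum>i<r. x i $ a * x i $ b)"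

definition vec_sum :: "nat \<Rightarrow> nat \<Rightarrow> (nat \<Rightarrow> bit vec) \<Rightarrow> bit vec" where
  "vec_sum n r x = vec n (\<lambda>a. \<Sum>i<r. x i $ a)"

definition mat_trace :: "'a::comm_ring_1 mat \<Rightarrow> 'a" where
  "mat_trace M = (\<Sum>i<dim_row M. M $$ (i,i))"

definition mat_rank :: "bit mat \<Rightarrow> nat" where
  "mat_rank M = vec_space.rank (dim_row M) M"

definition permutation_mat :: "nat \<Rightarrow> bit mat \<Rightarrow> bool" where
  "permutation_mat r Q \<longleftrightarrow> (\<exists>p. p permutes {..<r} \<and> Q = mat r r (\<lambda>(i,j). if i = p j then 1 else 0))"

definition J_block :: "nat \<Rightarrow> nat \<Rightarrow> bit mat" where
  "J_block r k = four_block_mat (mat k k (\<lambda>_. 1)) (0\<^sub>m k (r - k)) (0\<^sub>m (r - k) k) (0\<^sub>m (r - k) (r - k))"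

end

theory Submission
  imports Defs
begin

text \<open>
  Let \<open>X\<close> be the \<open>n \<times> r\<close> matrix with columns \<open>x\<^sub>i\<close> and \<open>B = A\<^sup>-\<^sup>1\<close>, so that the Gram matrix
  is \<open>X\<^sup>T B X\<close>, \<open>\<Sum> x\<^sub>i x\<^sub>i\<^sup>T = X X\<^sup>T\<close> and \<open>\<Sum> x\<^sub>i = X \<one>\<close>. Over \<open>F\<^sub>2\<close> a symmetric matrix of
  rank one is \<open>v v\<^sup>T\<close>; the hypotheses say that \<open>v \<noteq> 0\<close> has even weight and \<open>v \<noteq> \<one>\<close>.

  If \<open>X X\<^sup>T = Y Y\<^sup>T\<close> and \<open>X\<close> has a left inverse, then \<open>Y = X P\<close> with \<open>P P\<^sup>T = 1\<close>, so the
  Gram matrix of \<open>Y\<close> is \<open>u u\<^sup>T\<close> with \<open>u = P\<^sup>T v\<close>. Orthogonal matrices preserve \<open>v \<bullet> v\<close>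
  (the parity of the weight) and, over \<open>F\<^sub>2\<close>, fix \<open>\<one>\<close>; this gives (ii).

  For (i), the transvection \<open>I + w w\<^sup>T\<close>, \<open>w\<close> the indicator vector of a four-element set
  \<open>F\<close>, is orthogonal and maps \<open>v\<close> to \<open>v + w\<close> when \<open>F\<close> meets the support of \<open>v\<close> in an odd
  number of points. Taking three or one of these points in the support lowers or raises the
  weight by two, so some orthogonal \<open>R\<close> gives \<open>R v\<close> weight \<open>k\<close>. Then \<open>y = X R\<^sup>T\<close> has the same
  \<open>\<Sum> y\<^sub>i y\<^sub>i\<^sup>T\<close> and \<open>\<Sum> y\<^sub>i\<close> as \<open>x\<close> and Gram matrix \<open>(R v) (R v)\<^sup>T\<close>, which a permutation
  matrix conjugates to \<open>J\<^sub>k\<^sub>\<times>\<^sub>k \<oplus> O\<close>.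
\<close>

text \<open>The library simp rules rewrite \<open>+\<close> and \<open>*\<close> on \<^typ>\<open>bit\<close> to XOR and AND; we keep ring
  arithmetic.\<close>

declare add_bit_eq_xor[simp del] mult_bit_eq_and[simp del]

lemma bit_mult_self [simp]: "(a::bit) * a = a"
  by (cases a) auto

lemma bit_add_self [simp]: "(a::bit) + a = 0"
  by (cases a) auto

lemma of_nat_bit: "(of_nat m :: bit) = (if even m then 0 else 1)"
  by (induction m) auto

definition supp_vec :: "'a::zero vec \<Rightarrow> nat set" where
  "supp_vec v = {i. i < dim_vec v \<and> v $ i \<noteq> 0}"

definition indicator_vec :: "nat \<Rightarrow> nat set \<Rightarrow> 'a::zero_neq_one vec" where
  "indicator_vec r F = vec r (\<lambda>i. if i \<in> F then 1 else 0)"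

lemma indicator_vec_carrier [simp]: "indicator_vec r F \<in> carrier_vec r"
  by (simp add: indicator_vec_def)

lemma dim_indicator_vec [simp]: "dim_vec (indicator_vec r F) = r"
  by (simp add: indicator_vec_def)

lemma index_indicator_vec [simp]: "i < r \<Longrightarrow> indicator_vec r F $ i = (if i \<in> F then 1 else 0)"
  by (simp add: indicator_vec_def)

lemma supp_vec_subset: "supp_vec v \<subseteq> {..<dim_vec v}"
  by (auto simp: supp_vec_def)

lemma finite_supp_vec [simp]: "finite (supp_vec v)"
  using supp_vec_subset finite_subset by blast

lemma indicator_vec_supp_vec:
  fixes v :: "bit vec"
  assumes "v \<in> carrier_vec r"
  shows "indicator_vec r (supp_vec v) = v"
  using assms by (intro eq_vecI) (auto simp: indicator_vec_def supp_vec_def)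

lemma supp_indicator_vec:
  assumes "F \<subseteq> {..<r}"
  shows "supp_vec (indicator_vec r F :: 'a::zero_neq_one vec) = F"
  using assms by (auto simp: indicator_vec_def supp_vec_def split: if_splits)

lemma indicator_vec_scalar_prod:
  fixes v :: "bit vec"
  assumes "v \<in> carrier_vec r"
  shows "indicator_vec r F \<bullet> v = of_nat (card (F \<inter> supp_vec v))"
proof -
  have "indicator_vec r F \<bullet> v = (\<Sum>i<r. if i \<in> F \<inter> supp_vec v then 1 else 0)"
    using assms by (auto simp: scalar_prod_def indicator_vec_def supp_vec_def lessThan_atLeast0
        intro!: sum.cong)
  moreover have "{..<r} \<inter> {i \<in> F. i \<in> supp_vec v} = F \<inter> supp_vec v"
    using assms supp_vec_subset by fastforce
  ultimately show ?thesis
    by (simp add: sum.If_cases)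
qed

lemma bit_scalar_prod_self:
  fixes v :: "bit vec"
  assumes "v \<in> carrier_vec r"
  shows "v \<bullet> v = of_nat (card (supp_vec v))"
  using indicator_vec_scalar_prod[OF assms, of "supp_vec v"] indicator_vec_supp_vec[OF assms]
  by simp


lemma bit_vec_eq_ones_iff:
  fixes v :: "bit vec"
  assumes "v \<in> carrier_vec r"
  shows "v = indicator_vec r {..<r} \<longleftrightarrow> (\<forall>i<r. v $ i = 1)"
proof
  assume "\<forall>i<r. v $ i = 1"
  thus "v = indicator_vec r {..<r}" using assms by (intro eq_vecI) auto
qed simp

lemma bit_card_supp_vec_less_iff:
  fixes v :: "bit vec"
  assumes v: "v \<in> carrier_vec r"
  shows "card (supp_vec v) < r \<longleftrightarrow> v \<noteq> indicator_vec r {..<r}"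
proof -
  have S: "supp_vec v \<subseteq> {..<r}" using supp_vec_subset[of v] carrier_vecD[OF v] by simp
  have "card (supp_vec v) \<le> r" using card_mono[OF finite_lessThan S] by simp
  moreover have "card (supp_vec v) = r \<longleftrightarrow> supp_vec v = {..<r}"
  proof
    assume "card (supp_vec v) = r"
    thus "supp_vec v = {..<r}" using card_subset_eq[OF finite_lessThan S] by simp
  qed simp
  moreover have "supp_vec v = {..<r} \<longleftrightarrow> v = indicator_vec r {..<r}"
  proof
    assume "supp_vec v = {..<r}"
    thus "v = indicator_vec r {..<r}" using indicator_vec_supp_vec[OF v] by simp
  qed (simp add: supp_indicator_vec)
  ultimately show ?thesis by linarith
qed

lemma mult_zero_vec [simp]:
  "A \<in> carrier_mat n m \<Longrightarrow> A *\<^sub>v 0\<^sub>v m = (0\<^sub>v n :: 'a::semiring_0 vec)"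
  by (rule eq_vecI) auto

definition outer_mat :: "'a::times vec \<Rightarrow> 'a mat" where
  "outer_mat v = mat (dim_vec v) (dim_vec v) (\<lambda>(i, j). v $ i * v $ j)"

lemma outer_mat_carrier [simp]: "v \<in> carrier_vec r \<Longrightarrow> outer_mat v \<in> carrier_mat r r"
  by (simp add: outer_mat_def)

lemma dim_outer_mat [simp]:
  "dim_row (outer_mat v) = dim_vec v" "dim_col (outer_mat v) = dim_vec v"
  by (simp_all add: outer_mat_def)

lemma index_outer_mat [simp]:
  "i < dim_vec v \<Longrightarrow> j < dim_vec v \<Longrightarrow> outer_mat v $$ (i, j) = v $ i * v $ j"
  by (simp add: outer_mat_def)

lemma transpose_outer_mat [simp]:
  "transpose_mat (outer_mat (v :: 'a::comm_semiring_0 vec)) = outer_mat v"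
  by (rule eq_matI) (auto simp: mult.commute)

lemma outer_mat_congruence:
  fixes P :: "'a::comm_semiring_0 mat"
  assumes P: "P \<in> carrier_mat r r" and v: "v \<in> carrier_vec r"
  shows "transpose_mat P * outer_mat v * P = outer_mat (transpose_mat P *\<^sub>v v)"
proof (rule eq_matI)
  fix i j assume "i < dim_row (outer_mat (transpose_mat P *\<^sub>v v))"
    "j < dim_col (outer_mat (transpose_mat P *\<^sub>v v))"
  hence ij: "i < r" "j < r" using P by auto
  define c where "c k = (\<Sum>a<r. P $$ (a, k) * v $ a)" for k
  have "(transpose_mat P * outer_mat v * P) $$ (i, j) = (\<Sum>b<r. (\<Sum>a<r. P $$ (a, i) * (v $ a * v $ b)) * P $$ (b, j))"
    using P v ij by (simp add: scalar_prod_def lessThan_atLeast0)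
  also have "\<dots> = c i * c j"
    unfolding c_def by (simp add: sum_distrib_left sum_distrib_right mult_ac)
  also have "\<dots> = outer_mat (transpose_mat P *\<^sub>v v) $$ (i, j)"
    using P v ij by (simp add: c_def scalar_prod_def lessThan_atLeast0 mult.commute)
  finally show "(transpose_mat P * outer_mat v * P) $$ (i, j) = outer_mat (transpose_mat P *\<^sub>v v) $$ (i, j)" .
qed (use P v in auto)

lemma outer_mat_mult_self:
  fixes v :: "'a::comm_semiring_0 vec"
  assumes "v \<in> carrier_vec r"
  shows "outer_mat v * outer_mat v = (v \<bullet> v) \<cdot>\<^sub>m outer_mat v"
  using assms
  by (intro eq_matI) (auto simp: scalar_prod_def sum_distrib_left sum_distrib_right mult_ac)

lemma trace_outer_mat: "mat_trace (outer_mat v) = v \<bullet> v"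
  by (simp add: mat_trace_def scalar_prod_def lessThan_atLeast0)

lemma bit_outer_mat_zero_entry_iff:
  fixes v :: "bit vec"
  assumes v: "v \<in> carrier_vec r"
  shows "(\<exists>i<r. \<exists>j<r. outer_mat v $$ (i, j) = 0) \<longleftrightarrow> v \<noteq> indicator_vec r {..<r}"
proof -
  have "(\<exists>i<r. \<exists>j<r. outer_mat v $$ (i, j) = 0) \<longleftrightarrow> (\<exists>i<r. v $ i = 0)"
  proof
    assume "\<exists>i<r. \<exists>j<r. outer_mat v $$ (i, j) = 0"
    then obtain i j where "i < r" "j < r" "v $ i * v $ j = 0" using v by auto
    thus "\<exists>i<r. v $ i = 0" by (cases "v $ i") auto
  next
    assume "\<exists>i<r. v $ i = 0"
    then obtain i where "i < r" "v $ i = 0" by blast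
    thus "\<exists>i<r. \<exists>j<r. outer_mat v $$ (i, j) = 0" using v by (intro exI[of _ i]) (auto intro!: exI[of _ i])
  qed
  thus ?thesis using bit_vec_eq_ones_iff[OF v] by auto
qed

section \<open>Symmetric matrices of rank one over \<open>F\<^sub>2\<close>\<close>

lemma (in vec_space) lin_indpt_cols_of_trivial_kernel:
  assumes "A \<in> carrier_mat n nc" "distinct (cols A)"
    and "\<And>w. w \<in> carrier_vec nc \<Longrightarrow> A *\<^sub>v w = 0\<^sub>v n \<Longrightarrow> w = 0\<^sub>v nc"
  shows "lin_indpt (set (cols A))"
  using lin_depE[OF assms(1) _ assms(2)] assms(3) by metis

lemma (in vec_space) lin_indpt_singleton:
  assumes v: "v \<in> carrier_vec n" "v \<noteq> 0\<^sub>v n"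
  shows "lin_indpt {v}"
proof -
  let ?A = "mat_of_cols n [v]"
  obtain i where i: "i < n" "v $ i \<noteq> 0" using v by (metis carrier_vecD eq_vecI index_zero_vec)
  have "w = 0\<^sub>v 1" if w: "w \<in> carrier_vec 1" "?A *\<^sub>v w = 0\<^sub>v n" for w
  proof -
    have "v $ i * w $ 0 = 0"
      using arg_cong[OF w(2), of "\<lambda>u. u $ i"] i w(1) by (simp add: mat_of_cols_def scalar_prod_def)
    thus ?thesis using i w(1) by (auto intro!: eq_vecI)
  qed
  thus ?thesis
    using lin_indpt_cols_of_trivial_kernel[of ?A 1] mat_of_cols_carrier(1)[of n "[v]"] v by simp
qed

lemma bit_lin_indpt_pair:
  fixes c d :: "bit vec"
  assumes cd: "c \<in> carrier_vec n" "d \<in> carrier_vec n" "c \<noteq> 0\<^sub>v n" "d \<noteq> 0\<^sub>v n" "c \<noteq> d"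
  shows "\<not> module.lin_dep class_ring (module_vec TYPE(bit) n) {c, d}"
proof -
  interpret vec_space "TYPE(bit)" n .
  let ?A = "mat_of_cols n [c, d]"
  have A: "?A \<in> carrier_mat n 2"
    using mat_of_cols_carrier(1)[of n "[c, d]"] by (simp add: numeral_2_eq_2)
  have cols: "cols ?A = [c, d]" using cd by simp
  have kernel: "w = 0\<^sub>v 2" if w: "w \<in> carrier_vec 2" "?A *\<^sub>v w = 0\<^sub>v n" for w
  proof -
    have "(?A *\<^sub>v w) $ i = w $ 0 * c $ i + w $ 1 * d $ i" if "i < n" for i
      using that w(1) cd by (simp add: mat_of_cols_def scalar_prod_def numeral_2_eq_2)
    hence comb: "w $ 0 * c $ i + w $ 1 * d $ i = 0" if "i < n" for i
      using w(2) that by (metis index_zero_vec(1))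
    have differ: "\<exists>i<n. u $ i \<noteq> u' $ i"
      if "u \<in> carrier_vec n" "u' \<in> carrier_vec n" "u \<noteq> u'" for u u'
    proof (rule ccontr)
      assume "\<not> ?thesis"
      hence "u = u'" using that(1,2) by (intro eq_vecI) auto
      with that(3) show False ..
    qed
    obtain i j l where "i < n" "c $ i = 1" "j < n" "d $ j = 1" "l < n" "c $ l \<noteq> d $ l"
      using differ[of c "0\<^sub>v n"] differ[of d "0\<^sub>v n"] differ[of c d] cd by auto
    hence "w $ 0 = 0 \<and> w $ 1 = 0"
      using comb[of i] comb[of j] comb[of l]
      by (cases "w $ 0"; cases "w $ 1"; cases "c $ l"; cases "d $ l") simp_all
    thus ?thesis using w(1) by (intro eq_vecI) (auto simp: less_2_cases_iff)
  qed
  have "lin_indpt (set (cols ?A))"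
    by (rule lin_indpt_cols_of_trivial_kernel[OF A _ kernel]) (use cols cd in simp)
  thus ?thesis unfolding cols by simp
qed

lemma rank_outer_mat:
  fixes v :: "bit vec"
  assumes v: "v \<in> carrier_vec r" "v \<noteq> 0\<^sub>v r"
  shows "mat_rank (outer_mat v) = 1"
proof -
  interpret vec_space "TYPE(bit)" r .
  have O: "outer_mat v \<in> carrier_mat r r" using v by simp
  obtain j where j: "j < r" "v $ j = 1" using v by (metis carrier_vecD eq_vecI index_zero_vec bit_not_zero_iff)
  have "col (outer_mat v) j = v" using j v by (auto intro!: eq_vecI)
  hence "{v} \<subseteq> set (cols (outer_mat v))" using j v by (auto simp: cols_def intro!: image_eqI[where x = j])
  hence "rank (outer_mat v) \<ge> 1" using rank_ge_card_indpt[OF O _ lin_indpt_singleton[OF v]] by simp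
  moreover have "rank (outer_mat v) \<le> 1"
    using rank_le_1_product_entries[OF O, of "\<lambda>i. v $ i" "\<lambda>j. v $ j"] v by simp
  ultimately show ?thesis using v by (simp add: mat_rank_def)
qed

text \<open>Over \<open>F\<^sub>2\<close> the span of a nonzero vector \<open>c\<close> is \<open>{0, c}\<close>.\<close>

lemma bit_rank_le_one_cols_eq:
  fixes G :: "bit mat"
  assumes G: "G \<in> carrier_mat n m" and rank: "vec_space.rank n G \<le> 1"
    and j: "j < m" "j' < m" "col G j \<noteq> 0\<^sub>v n" "col G j' \<noteq> 0\<^sub>v n"
  shows "col G j = col G j'"
proof (rule ccontr)
  interpret vec_space "TYPE(bit)" n .
  assume ne: "col G j \<noteq> col G j'"
  have "{col G j, col G j'} \<subseteq> set (cols G)" using j G by (auto simp: cols_def)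
  moreover have "col G j \<in> carrier_vec n" "col G j' \<in> carrier_vec n" using G by auto
  ultimately have "card {col G j, col G j'} \<le> rank G"
    using rank_ge_card_indpt[OF G] bit_lin_indpt_pair[OF _ _ j(3,4) ne] by simp
  with ne rank show False by simp
qed

lemma bit_rank_one_symmetric_eq_outer_mat:
  fixes G :: "bit mat"
  assumes G: "G \<in> carrier_mat r r" "transpose_mat G = G" and rank: "mat_rank G = 1"
  shows "\<exists>v. v \<in> carrier_vec r \<and> v \<noteq> 0\<^sub>v r \<and> G = outer_mat v"
proof -
  interpret vec_space "TYPE(bit)" r .
  have sym: "G $$ (i, j) = G $$ (j, i)" if "i < r" "j < r" for i j
  proof -
    have "transpose_mat G $$ (i, j) = G $$ (j, i)" using that G(1) by simp
    thus ?thesis by (simp add: G(2))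
  qed
  have cols_eq: "col G j = col G j'" if "j < r" "j' < r" "col G j \<noteq> 0\<^sub>v r" "col G j' \<noteq> 0\<^sub>v r" for j j'
    using bit_rank_le_one_cols_eq[OF G(1) _ that] rank G by (simp add: mat_rank_def)
  have "G \<noteq> 0\<^sub>m r r" using rank rank_0I by (auto simp: mat_rank_def)
  then obtain i0 j0 where ij0: "i0 < r" "j0 < r" "G $$ (i0, j0) = 1"
    using G(1) by (metis bit_not_zero_iff eq_matI carrier_matD index_zero_mat)
  define c where "c = col G j0"
  have c: "c \<in> carrier_vec r" "c $ i0 = 1" using G ij0 by (auto simp: c_def)
  hence "c \<noteq> 0\<^sub>v r" using ij0 by auto
  have "col G i0 $ j0 = 1" using ij0 sym G by simp
  hence "col G i0 \<noteq> 0\<^sub>v r" using ij0 by auto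
  hence "col G i0 = c" using cols_eq[of i0 j0] ij0 \<open>c \<noteq> 0\<^sub>v r\<close> by (simp add: c_def)
  hence c_j0: "c $ j0 = 1" using ij0 sym G by (metis \<open>col G i0 $ j0 = 1\<close>)
  have col_G: "col G j = c $ j \<cdot>\<^sub>v c" if j: "j < r" for j
  proof (cases "col G j = 0\<^sub>v r")
    case True
    have "c $ j = col G j $ j0" using j ij0 sym G by (simp add: c_def)
    thus ?thesis using True j ij0 c by (auto intro!: eq_vecI)
  next
    case False
    hence cj: "col G j = c" using cols_eq[of j j0] j ij0 \<open>c \<noteq> 0\<^sub>v r\<close> by (simp add: c_def)
    have "c $ j = col G j $ j0" using j ij0 sym G by (simp add: c_def)
    thus ?thesis using cj c_j0 c by (auto intro!: eq_vecI)
  qed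
  have "G = outer_mat c"
  proof (rule eq_matI)
    fix i j assume "i < dim_row (outer_mat c)" "j < dim_col (outer_mat c)"
    hence ij: "i < r" "j < r" using c by auto
    show "G $$ (i, j) = outer_mat c $$ (i, j)"
      using arg_cong[OF col_G[OF ij(2)], of "\<lambda>u. u $ i"] ij G c by (simp add: mult.commute)
  qed (use G c in auto)
  thus ?thesis using c \<open>c \<noteq> 0\<^sub>v r\<close> by blast
qed

lemma inv_of_SGL:
  assumes "A \<in> SGL n"
  shows "inv_of n A \<in> carrier_mat n n" "transpose_mat (inv_of n A) = inv_of n A"
proof -
  have A: "A \<in> carrier_mat n n" "transpose_mat A = A" "invertible_mat A"
    using assms by (auto simp: SGL_def)
  then obtain B where AB: "A * B = 1\<^sub>m n" and BA: "B * A = 1\<^sub>m (dim_row B)"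
    unfolding invertible_mat_def inverts_mat_def by auto
  have "B \<in> carrier_mat n n"
    using arg_cong[OF AB, of dim_col] arg_cong[OF BA, of dim_col] A(1) by auto
  with AB BA have "\<exists>B. B \<in> carrier_mat n n \<and> A * B = 1\<^sub>m n \<and> B * A = 1\<^sub>m n" by auto
  hence C: "inv_of n A \<in> carrier_mat n n" "A * inv_of n A = 1\<^sub>m n"
    unfolding inv_of_def by (metis (mono_tags, lifting) someI_ex)+
  thus "inv_of n A \<in> carrier_mat n n" by simp
  have "transpose_mat (inv_of n A) * A = transpose_mat (A * inv_of n A)"
    using transpose_mult[OF A(1) C(1)] A(2) by simp
  hence CtA: "transpose_mat (inv_of n A) * A = 1\<^sub>m n" using C(2) by simp
  have "transpose_mat (inv_of n A) = transpose_mat (inv_of n A) * (A * inv_of n A)"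
    using C by simp
  also have "\<dots> = inv_of n A" using CtA A(1) C(1) by (simp flip: assoc_mult_mat[of _ n n A n])
  finally show "transpose_mat (inv_of n A) = inv_of n A" .
qed

definition family_mat :: "nat \<Rightarrow> nat \<Rightarrow> (nat \<Rightarrow> 'a vec) \<Rightarrow> 'a mat" where
  "family_mat n r x = mat n r (\<lambda>(a, i). x i $ a)"

lemma family_mat_carrier [simp]: "family_mat n r x \<in> carrier_mat n r"
  by (simp add: family_mat_def)

lemma dim_family_mat [simp]: "dim_row (family_mat n r x) = n" "dim_col (family_mat n r x) = r"
  by (simp_all add: family_mat_def)

lemma col_family_mat: "i < r \<Longrightarrow> x i \<in> carrier_vec n \<Longrightarrow> col (family_mat n r x) i = x i"
  by (auto simp: family_mat_def)

lemma cols_family_mat: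
  "\<forall>i<r. x i \<in> carrier_vec n \<Longrightarrow> cols (family_mat n r x) = map x [0..<r]"
  by (intro nth_equalityI) (auto simp: col_family_mat)

lemma family_mat_col: "Y \<in> carrier_mat n r \<Longrightarrow> family_mat n r (col Y) = Y"
  by (auto simp: family_mat_def)

lemma gram_eq_family_mat:
  assumes "\<forall>i<r. x i \<in> carrier_vec n" "A \<in> SGL n"
  shows "gram n A r x = transpose_mat (family_mat n r x) * (inv_of n A * family_mat n r x)"
  using assms inv_of_SGL(1)[OF assms(2)]
  by (intro eq_matI) (auto simp: gram_def col_family_mat col_mult2[OF _ family_mat_carrier])

lemma outer_sum_eq_family_mat:
  "outer_sum n r x = family_mat n r x * transpose_mat (family_mat n r x)"
  by (rule eq_matI) (auto simp: outer_sum_def family_mat_def scalar_prod_def lessThan_atLeast0)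

lemma vec_sum_eq_family_mat: "vec_sum n r x = family_mat n r x *\<^sub>v indicator_vec r {..<r}"
  by (rule eq_vecI) (auto simp: vec_sum_def family_mat_def indicator_vec_def scalar_prod_def lessThan_atLeast0)

lemma (in vec_space) lin_indpt_extends_to_basis:
  assumes xs: "set xs \<subseteq> carrier_vec n" "distinct xs" "lin_indpt (set xs)"
  shows "\<exists>ys. length (xs @ ys) = n \<and> distinct (xs @ ys) \<and> set (xs @ ys) \<subseteq> carrier_vec n
    \<and> lin_indpt (set (xs @ ys))"
proof -
  define P where "P T \<longleftrightarrow> T \<subseteq> carrier_vec n \<and> lin_indpt T \<and> set xs \<subseteq> T" for T
  have "finite T \<and> card T \<le> n" if "P T" for T
    using that li_le_dim[OF fin_dim, of T] dim_is_n unfolding P_def by auto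
  then obtain T where T: "finite T" "maximal T P"
    using maximal_exists[of P n "set xs"] xs unfolding P_def by blast
  hence PT: "T \<subseteq> carrier_vec n" "lin_indpt T" "set xs \<subseteq> T" by (auto simp: maximal_def P_def)
  hence "maximal T (\<lambda>S. S \<subseteq> carrier_vec n \<and> lin_indpt S)"
    using T(2) unfolding maximal_def P_def by blast
  hence "card T = n" using max_li_is_basis dim_basis[OF T(1)] dim_is_n by simp
  obtain ys where ys: "set ys = T - set xs" "distinct ys"
    using finite_distinct_list[of "T - set xs"] T(1) by auto
  have "length (xs @ ys) = n"
    using \<open>card T = n\<close> distinct_card[OF ys(2)] distinct_card[OF xs(2)] ys(1) PT(3) T(1)
      card_mono[OF T(1) PT(3)] by (simp add: card_Diff_subset)
  moreover have "set (xs @ ys) = T" using ys(1) PT(3) by auto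
  moreover have "distinct (xs @ ys)" using xs(2) ys by auto
  ultimately show ?thesis using PT(1,2) by (intro exI[of _ ys]) auto
qed

lemma (in vec_space) lin_indpt_cols_left_inverse:
  assumes X: "X \<in> carrier_mat n r" "distinct (cols X)" "lin_indpt (set (cols X))"
  shows "\<exists>L. L \<in> carrier_mat r n \<and> L * X = 1\<^sub>m r"
proof -
  have "set (cols X) \<subseteq> carrier_vec n" using X(1) cols_dim by blast
  then obtain ys where ys: "length (cols X @ ys) = n" "distinct (cols X @ ys)"
    "set (cols X @ ys) \<subseteq> carrier_vec n" "lin_indpt (set (cols X @ ys))"
    using lin_indpt_extends_to_basis X(2,3) by blast
  define S where "S = mat_of_cols n (cols X @ ys)"
  have S: "S \<in> carrier_mat n n" "cols S = cols X @ ys"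
    using ys(1,3) by (auto simp: S_def simp del: length_append)
  have "rank S = n" using lin_indpt_full_rank[OF S(1)] S(2) ys by simp
  then obtain D where D: "D \<in> carrier_mat n n" "D * S = 1\<^sub>m n"
    using det_non_zero_imp_unit[OF S(1), of undefined] det_rank_iff[OF S(1)]
    by (auto simp: Units_def ring_mat_def)
  have rn: "r \<le> n" using ys(1) X(1) by simp
  define L where "L = mat r n (\<lambda>(j, a). D $$ (j, a))"
  have "L * X = 1\<^sub>m r"
  proof (rule eq_matI)
    fix j i assume "j < dim_row (1\<^sub>m r :: 'a mat)" "i < dim_col (1\<^sub>m r :: 'a mat)"
    hence ji: "j < r" "i < r" by auto
    have "row L j = row D j" using ji rn D(1) by (auto simp: L_def)
    moreover have "col S i = col X i"
    proof -
      have "col S i = cols S ! i" using ji rn S(1) by simp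
      thus ?thesis using ji X(1) S(2) by (simp add: nth_append)
    qed
    ultimately have "(L * X) $$ (j, i) = (D * S) $$ (j, i)"
      using ji rn X(1) D(1) S(1) by (simp add: L_def)
    thus "(L * X) $$ (j, i) = 1\<^sub>m r $$ (j, i)" using D(2) ji rn by simp
  qed (use X in \<open>auto simp: L_def\<close>)
  moreover have "L \<in> carrier_mat r n" by (simp add: L_def)
  ultimately show ?thesis by blast
qed

lemma lin_indep_family_left_inverse:
  assumes "lin_indep_family n r x"
  shows "\<exists>L. L \<in> carrier_mat r n \<and> L * family_mat n r x = 1\<^sub>m r"
proof -
  interpret vec_space "TYPE(bit)" n .
  have x: "\<forall>i<r. x i \<in> carrier_vec n" "inj_on x {..<r}" "lin_indpt (x ` {..<r})"
    using assms by (auto simp: lin_indep_family_def)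
  hence "distinct (cols (family_mat n r x))" "set (cols (family_mat n r x)) = x ` {..<r}"
    by (auto simp: cols_family_mat distinct_map lessThan_atLeast0)
  thus ?thesis using lin_indpt_cols_left_inverse[OF family_mat_carrier] x(3) by simp
qed

lemma lin_indep_family_of_left_inverse:
  assumes Y: "Y \<in> carrier_mat n r" and L: "L \<in> carrier_mat r n" "L * Y = 1\<^sub>m r"
  shows "lin_indep_family n r (col Y)"
proof -
  interpret vec_space "TYPE(bit)" n .
  have L_col: "L *\<^sub>v col Y i = unit_vec r i" if "i < r" for i
    using that Y L col_mult2[OF L(1) Y, of i, symmetric] by simp
  have inj: "inj_on (col Y) {..<r}"
    by (rule inj_onI) (metis L_col lessThan_iff unit_vec_eq)
  hence "distinct (cols Y)" using Y by (simp add: cols_def distinct_map lessThan_atLeast0)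
  moreover have "w = 0\<^sub>v r" if w: "w \<in> carrier_vec r" "Y *\<^sub>v w = 0\<^sub>v n" for w
  proof -
    have "w = L *\<^sub>v (Y *\<^sub>v w)" using w(1) Y L by (simp flip: assoc_mult_mat_vec)
    also have "\<dots> = 0\<^sub>v r" using w(2) L(1) by simp
    finally show ?thesis .
  qed
  ultimately have "lin_indpt (set (cols Y))" by (rule lin_indpt_cols_of_trivial_kernel[OF Y])
  moreover have "set (cols Y) = col Y ` {..<r}" using Y by (auto simp: cols_def lessThan_atLeast0)
  ultimately show ?thesis using Y inj by (auto simp: lin_indep_family_def)
qed

section \<open>Orthogonal matrices\<close>

lemma mult_congruence_assoc:
  fixes A :: "'a::comm_semiring_0 mat"
  assumes A: "A \<in> carrier_mat a b" and B: "B \<in> carrier_mat b c" and M: "M \<in> carrier_mat c c"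
  shows "A * (B * M * transpose_mat B) * transpose_mat A = (A * B) * M * transpose_mat (A * B)"
proof -
  have BM: "B * M \<in> carrier_mat b c" using B M by simp
  have "A * (B * M * transpose_mat B) = A * (B * M) * transpose_mat B"
    using assoc_mult_mat[OF A BM, of "transpose_mat B" b] B by simp
  also have "A * (B * M) = A * B * M" using assoc_mult_mat[OF A B M] by simp
  finally have "A * (B * M * transpose_mat B) * transpose_mat A
      = A * B * M * (transpose_mat B * transpose_mat A)"
    using assoc_mult_mat[of "A * B * M" a c "transpose_mat B" b "transpose_mat A" a] A B M by simp
  thus ?thesis using transpose_mult[OF A B] by simp
qed

lemma transpose_mult_congruence:
  fixes X :: "'a::comm_semiring_0 mat"
  assumes X: "X \<in> carrier_mat n r" and P: "P \<in> carrier_mat r s" and B: "B \<in> carrier_mat n n"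
  shows "transpose_mat (X * P) * (B * (X * P)) = transpose_mat P * (transpose_mat X * (B * X)) * P"
proof -
  have BX: "B * X \<in> carrier_mat n r" using B X by simp
  have "transpose_mat (X * P) * (B * (X * P)) = transpose_mat P * transpose_mat X * (B * X * P)"
    using transpose_mult[OF X P] assoc_mult_mat[OF B X P] by simp
  also have "\<dots> = transpose_mat P * (transpose_mat X * (B * X * P))"
    using assoc_mult_mat[of "transpose_mat P" s r "transpose_mat X" n "B * X * P" s] X P BX by simp
  also have "transpose_mat X * (B * X * P) = transpose_mat X * (B * X) * P"
    using assoc_mult_mat[of "transpose_mat X" r n "B * X" r P s] X P BX by simp
  also have "transpose_mat P * (transpose_mat X * (B * X) * P) = transpose_mat P * (transpose_mat X * (B * X)) * P"
    using assoc_mult_mat[of "transpose_mat P" s r "transpose_mat X * (B * X)" r P s] X P BX by simp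
  finally show ?thesis .
qed

definition orth_mat :: "nat \<Rightarrow> 'a::comm_ring_1 mat \<Rightarrow> bool" where
  "orth_mat r R \<longleftrightarrow> R \<in> carrier_mat r r \<and> R * transpose_mat R = 1\<^sub>m r \<and> transpose_mat R * R = 1\<^sub>m r"

lemma orth_mat_carrier: "orth_mat r R \<Longrightarrow> R \<in> carrier_mat r r"
  by (simp add: orth_mat_def)

lemma orth_mat_one: "orth_mat r (1\<^sub>m r)"
  by (simp add: orth_mat_def)

lemma orth_mat_transpose: "orth_mat r R \<Longrightarrow> orth_mat r (transpose_mat R)"
  by (auto simp: orth_mat_def)

lemma orth_mat_mult:
  assumes "orth_mat r R" "orth_mat r S"
  shows "orth_mat r (R * S)"
proof -
  have R: "R \<in> carrier_mat r r" "R * transpose_mat R = 1\<^sub>m r" "transpose_mat R * R = 1\<^sub>m r"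
    and S: "S \<in> carrier_mat r r" "S * transpose_mat S = 1\<^sub>m r" "transpose_mat S * S = 1\<^sub>m r"
    using assms by (auto simp: orth_mat_def)
  have "R * S * transpose_mat (R * S) = R * (S * 1\<^sub>m r * transpose_mat S) * transpose_mat R"
    using mult_congruence_assoc[OF R(1) S(1) one_carrier_mat] R(1) S(1) by simp
  hence "R * S * transpose_mat (R * S) = 1\<^sub>m r" using R S by simp
  moreover have "transpose_mat (R * S) * (R * S) = transpose_mat S * (transpose_mat R * (R * S))"
    using R(1) S(1) by (simp add: transpose_mult[OF R(1) S(1)] assoc_mult_mat[of _ r r _ r _ r])
  hence "transpose_mat (R * S) * (R * S) = 1\<^sub>m r"
    using R S by (simp flip: assoc_mult_mat[of _ r r _ r _ r])
  ultimately show ?thesis using R(1) S(1) by (simp add: orth_mat_def)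
qed

lemma orth_mat_scalar_prod_self:
  assumes R: "orth_mat r R" and v: "v \<in> carrier_vec r"
  shows "(R *\<^sub>v v) \<bullet> (R *\<^sub>v v) = v \<bullet> v"
proof -
  have Rc: "R \<in> carrier_mat r r" and RtR: "transpose_mat R * R = 1\<^sub>m r" using R by (auto simp: orth_mat_def)
  have "(R *\<^sub>v v) \<bullet> (R *\<^sub>v v) = v \<bullet> (transpose_mat R *\<^sub>v (R *\<^sub>v v))"
    using transpose_vec_mult_scalar[of "transpose_mat R" r r "R *\<^sub>v v" v] Rc v by simp
  also have "\<dots> = v \<bullet> v" using Rc v RtR by (simp flip: assoc_mult_mat_vec)
  finally show ?thesis .
qed

text \<open>Over \<open>F\<^sub>2\<close> every row \<open>\<rho>\<close> of an orthogonal matrix satisfies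
  \<open>\<Sum>\<^sub>j \<rho>\<^sub>j = \<Sum>\<^sub>j \<rho>\<^sub>j\<^sup>2 = 1\<close>.\<close>

lemma bit_orth_mat_mult_ones:
  fixes R :: "bit mat"
  assumes "orth_mat r R"
  shows "R *\<^sub>v indicator_vec r {..<r} = indicator_vec r {..<r}"
proof (rule eq_vecI)
  have R: "R \<in> carrier_mat r r" "R * transpose_mat R = 1\<^sub>m r" using assms by (auto simp: orth_mat_def)
  fix i assume "i < dim_vec (indicator_vec r {..<r} :: bit vec)"
  hence i: "i < r" by (simp add: indicator_vec_def)
  have "(R *\<^sub>v indicator_vec r {..<r}) $ i = (\<Sum>j<r. R $$ (i, j))"
    using R i by (simp add: indicator_vec_def scalar_prod_def lessThan_atLeast0)
  also have "\<dots> = (R * transpose_mat R) $$ (i, i)"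
    using R(1) i by (simp add: scalar_prod_def lessThan_atLeast0)
  also have "\<dots> = 1" using R(2) i by simp
  finally show "(R *\<^sub>v indicator_vec r {..<r}) $ i = indicator_vec r {..<r} $ i"
    using i by (simp add: indicator_vec_def)
qed (use assms in \<open>auto simp: orth_mat_def indicator_vec_def\<close>)

lemma mult_transpose_eq_imp_orth_factor:
  fixes X Y L :: "'a::field mat"
  assumes X: "X \<in> carrier_mat n r" and Y: "Y \<in> carrier_mat n r"
    and L: "L \<in> carrier_mat r n" "L * X = 1\<^sub>m r"
    and XY: "X * transpose_mat X = Y * transpose_mat Y"
  shows "\<exists>P. orth_mat r P \<and> Y = X * P"
proof -
  define C where "C = transpose_mat Y * transpose_mat L"
  have C: "C \<in> carrier_mat r r" using Y L by (simp add: C_def)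
  have LXt: "transpose_mat X * transpose_mat L = 1\<^sub>m r"
    using transpose_mult[OF L(1) X] L(2) by simp
  have "Y * C = X * transpose_mat X * transpose_mat L"
    using X Y L(1) by (simp add: C_def XY assoc_mult_mat[of Y n r _ n _ r])
  also have "\<dots> = X" using X L(1) LXt by (simp add: assoc_mult_mat[of X n r _ n _ r])
  finally have YC: "Y * C = X" .
  have "w = 0\<^sub>v r" if w: "w \<in> carrier_vec r" "C *\<^sub>v w = 0\<^sub>v r" for w
  proof -
    have "w = L *\<^sub>v (Y *\<^sub>v (C *\<^sub>v w))"
      using w(1) X Y L C YC by (simp flip: assoc_mult_mat_vec)
    also have "\<dots> = 0\<^sub>v r" using w(2) Y L(1) by simp
    finally show ?thesis .
  qed
  hence "det C \<noteq> 0" using det_0_iff_vec_prod_zero_field[OF C] by auto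
  then obtain D where D: "D \<in> carrier_mat r r" "C * D = 1\<^sub>m r"
    using det_non_zero_imp_unit[OF C, of undefined] by (auto simp: Units_def ring_mat_def)
  have Y_XD: "Y = X * D"
  proof -
    have "Y = Y * (C * D)" using Y D by simp
    also have "\<dots> = X * D" using assoc_mult_mat[OF Y C D(1)] YC by simp
    finally show ?thesis .
  qed
  have "1\<^sub>m r = L * (X * 1\<^sub>m r * transpose_mat X) * transpose_mat L"
    using mult_congruence_assoc[OF L(1) X one_carrier_mat] X L by simp
  also have "\<dots> = L * (X * (D * 1\<^sub>m r * transpose_mat D) * transpose_mat X) * transpose_mat L"
    using XY X D mult_congruence_assoc[OF X D(1) one_carrier_mat] by (simp add: Y_XD)
  also have "\<dots> = D * transpose_mat D"
    using mult_congruence_assoc[OF L(1) X, of "D * transpose_mat D"] X D L by simp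
  finally have "D * transpose_mat D = 1\<^sub>m r" ..
  moreover have "transpose_mat D * D = 1\<^sub>m r"
    using mat_mult_left_right_inverse[OF D(1) _ calculation] D(1) by simp
  ultimately show ?thesis using D(1) Y_XD by (auto simp: orth_mat_def)
qed

section \<open>Transvections and the weight of \<open>v\<close>\<close>

lemma outer_mat_mult_vec:
  fixes w :: "'a::comm_semiring_0 vec"
  assumes "w \<in> carrier_vec r" "v \<in> carrier_vec r"
  shows "outer_mat w *\<^sub>v v = (w \<bullet> v) \<cdot>\<^sub>v w"
  using assms by (intro eq_vecI) (auto simp: scalar_prod_def sum_distrib_left mult_ac)

definition transvection_mat :: "nat \<Rightarrow> nat set \<Rightarrow> bit mat" where
  "transvection_mat r F = 1\<^sub>m r + outer_mat (indicator_vec r F)"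

lemma transvection_mat_carrier [simp]: "transvection_mat r F \<in> carrier_mat r r"
  by (simp add: transvection_mat_def)

lemma orth_mat_transvection_mat:
  assumes F: "F \<subseteq> {..<r}" "even (card F)"
  shows "orth_mat r (transvection_mat r F)"
proof -
  define E where "E = outer_mat (indicator_vec r F :: bit vec)"
  have E: "E \<in> carrier_mat r r" "transpose_mat E = E" by (simp_all add: E_def)
  have ww: "indicator_vec r F \<bullet> (indicator_vec r F :: bit vec) = 0"
    using bit_scalar_prod_self[of "indicator_vec r F" r] F(2)
    by (simp add: supp_indicator_vec[OF F(1)] of_nat_bit)
  have "E * E = 0 \<cdot>\<^sub>m E"
    using outer_mat_mult_self[of "indicator_vec r F :: bit vec" r] by (simp add: ww E_def)
  hence EE: "E * E = 0\<^sub>m r r" using E(1) by (auto intro!: eq_matI)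
  have T: "transvection_mat r F = 1\<^sub>m r + E" by (simp add: transvection_mat_def E_def)
  have "(1\<^sub>m r + E) * (1\<^sub>m r + E) = 1\<^sub>m r * (1\<^sub>m r + E) + E * (1\<^sub>m r + E)"
    by (rule add_mult_distrib_mat[OF one_carrier_mat E(1), of _ r]) (use E(1) in simp)
  also have "E * (1\<^sub>m r + E) = E * 1\<^sub>m r + E * E"
    by (rule mult_add_distrib_mat[OF E(1) one_carrier_mat E(1)])
  also have "1\<^sub>m r * (1\<^sub>m r + E) + (E * 1\<^sub>m r + E * E) = 1\<^sub>m r"
    using E(1) unfolding EE by (intro eq_matI) (auto simp: add.assoc)
  finally have "(1\<^sub>m r + E) * (1\<^sub>m r + E) = 1\<^sub>m r" .
  moreover have "transpose_mat (1\<^sub>m r + E) = 1\<^sub>m r + E"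
    using E by (simp add: transpose_add[of _ r r])
  ultimately show ?thesis unfolding orth_mat_def T using E(1) by simp
qed

lemma supp_transvection_mult_vec:
  fixes v :: "bit vec"
  assumes F: "F \<subseteq> {..<r}" and v: "v \<in> carrier_vec r" and odd: "odd (card (F \<inter> supp_vec v))"
  shows "supp_vec (transvection_mat r F *\<^sub>v v) = sym_diff (supp_vec v) F"
proof -
  have "indicator_vec r F \<bullet> v = 1" using indicator_vec_scalar_prod[OF v] odd by (simp add: of_nat_bit)
  moreover have "transvection_mat r F *\<^sub>v v = 1\<^sub>m r *\<^sub>v v + outer_mat (indicator_vec r F) *\<^sub>v v"
    unfolding transvection_mat_def by (rule add_mult_distrib_mat_vec[OF one_carrier_mat _ v]) simp
  ultimately have "transvection_mat r F *\<^sub>v v = v + indicator_vec r F"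
    using v outer_mat_mult_vec[of "indicator_vec r F" r v] by simp
  moreover have "(v + indicator_vec r F) $ i \<noteq> 0 \<longleftrightarrow> (i \<in> supp_vec v \<longleftrightarrow> i \<notin> F)"
    if "i < r" for i
    using that v by (cases "v $ i") (auto simp: indicator_vec_def supp_vec_def)
  ultimately show ?thesis
    using F v by (auto simp: supp_vec_def)
qed

lemma card_sym_diff:
  assumes "finite S" "finite F"
  shows "card (sym_diff S F) + 2 * card (S \<inter> F) = card S + card F"
proof -
  have "card ((S - F) \<union> (F - S)) = card (S - F) + card (F - S)"
    by (rule card_Un_disjoint) (use assms in auto)
  moreover have "card S = card (S \<inter> F) + card (S - F)" using assms(1) by (rule card_Int_Diff)
  moreover have "card F = card (S \<inter> F) + card (F - S)"
    using card_Int_Diff[OF assms(2), of S] by (simp add: Int_commute)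
  ultimately show ?thesis by linarith
qed

lemma exists_subset_meeting:
  assumes "finite U" "S \<subseteq> U" "a \<le> card S" "b \<le> card (U - S)"
  shows "\<exists>F \<subseteq> U. card F = a + b \<and> card (F \<inter> S) = a"
proof -
  obtain A where A: "A \<subseteq> S" "card A = a" "finite A" by (rule obtain_subset_with_card_n[OF assms(3)])
  obtain B where B: "B \<subseteq> U - S" "card B = b" "finite B" by (rule obtain_subset_with_card_n[OF assms(4)])
  have "card (A \<union> B) = a + b"
    using card_Un_disjoint[OF A(3) B(3)] A(1,2) B(1,2) by auto
  moreover have "(A \<union> B) \<inter> S = A" using A(1) B(1) by blast
  moreover have "A \<union> B \<subseteq> U" using A(1) B(1) assms(2) by blast
  ultimately show ?thesis using A(2) by (intro exI[of _ "A \<union> B"]) simp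
qed

text \<open>The transvection is taken along a four-element set \<open>F\<close> meeting the support \<open>S\<close> in \<open>j\<close>
  points; it replaces \<open>S\<close> by \<open>S \<triangle> F\<close>.\<close>

lemma orth_mat_shift_weight:
  fixes v :: "bit vec"
  assumes v: "v \<in> carrier_vec r" and j: "odd j" "j \<le> 4" "j \<le> card (supp_vec v)"
    "4 - j \<le> r - card (supp_vec v)"
  shows "\<exists>R. orth_mat r R \<and> card (supp_vec (R *\<^sub>v v)) + 2 * j = card (supp_vec v) + 4"
proof -
  let ?S = "supp_vec v"
  have S: "?S \<subseteq> {..<r}" using supp_vec_subset[of v] carrier_vecD[OF v] by simp
  hence "card ({..<r} - ?S) = r - card ?S" by (simp add: card_Diff_subset)
  then obtain F where F: "F \<subseteq> {..<r}" "card F = 4" "card (F \<inter> ?S) = j"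
    using exists_subset_meeting[OF finite_lessThan S, of j "4 - j"] j(2-4) by auto
  have "supp_vec (transvection_mat r F *\<^sub>v v) = sym_diff ?S F"
    using supp_transvection_mult_vec[OF F(1) v] F(3) j(1) by simp
  moreover have "card (sym_diff ?S F) + 2 * card (F \<inter> ?S) = card ?S + card F"
    using card_sym_diff[of ?S F] finite_subset[OF F(1)] by (simp add: Int_commute)
  moreover have "orth_mat r (transvection_mat r F)" using orth_mat_transvection_mat F by simp
  ultimately show ?thesis using F(2,3) by (intro exI[of _ "transvection_mat r F"]) simp
qed

lemma orth_mat_mult_vec_compose:
  assumes "orth_mat r R1" "v \<in> carrier_vec r" "orth_mat r R2" "P (R2 *\<^sub>v (R1 *\<^sub>v v))"
  shows "\<exists>R. orth_mat r R \<and> P (R *\<^sub>v v)"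
proof -
  have "(R2 * R1) *\<^sub>v v = R2 *\<^sub>v (R1 *\<^sub>v v)"
    using orth_mat_carrier[OF assms(1)] orth_mat_carrier[OF assms(3)] assms(2) by simp
  thus ?thesis using assms(4) orth_mat_mult[OF assms(3,1)] by (intro exI[of _ "R2 * R1"]) simp
qed

lemma orth_mat_lower_weight:
  fixes v :: "bit vec"
  assumes "v \<in> carrier_vec r" "card (supp_vec v) = k + 2 * m" "card (supp_vec v) < r" "1 \<le> k"
  shows "\<exists>R. orth_mat r R \<and> card (supp_vec (R *\<^sub>v v)) = k"
  using assms
proof (induction m arbitrary: v)
  case 0
  thus ?case by (intro exI[of _ "1\<^sub>m r"]) (simp add: orth_mat_one)
next
  case (Suc m)
  have "\<exists>R. orth_mat r R \<and> card (supp_vec (R *\<^sub>v v)) + 2 * 3 = card (supp_vec v) + 4"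
    by (rule orth_mat_shift_weight[OF Suc.prems(1)]) (use Suc.prems(2-4) in simp_all)
  then obtain R1 where R1: "orth_mat r R1" "card (supp_vec (R1 *\<^sub>v v)) + 6 = card (supp_vec v) + 4"
    by auto
  have "R1 *\<^sub>v v \<in> carrier_vec r" using orth_mat_carrier[OF R1(1)] Suc.prems(1) by simp
  moreover have "card (supp_vec (R1 *\<^sub>v v)) = k + 2 * m" "card (supp_vec (R1 *\<^sub>v v)) < r"
    using R1(2) Suc.prems(2,3) by simp_all
  ultimately obtain R2 where "orth_mat r R2" "card (supp_vec (R2 *\<^sub>v (R1 *\<^sub>v v))) = k"
    using Suc.IH Suc.prems(4) by blast
  thus ?case by (rule orth_mat_mult_vec_compose[OF R1(1) Suc.prems(1)])
qed

lemma orth_mat_raise_weight: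
  fixes v :: "bit vec"
  assumes "v \<in> carrier_vec r" "card (supp_vec v) + 2 * m = k" "k < r" "1 \<le> card (supp_vec v)"
  shows "\<exists>R. orth_mat r R \<and> card (supp_vec (R *\<^sub>v v)) = k"
  using assms
proof (induction m arbitrary: v)
  case 0
  thus ?case by (intro exI[of _ "1\<^sub>m r"]) (simp add: orth_mat_one)
next
  case (Suc m)
  have "\<exists>R. orth_mat r R \<and> card (supp_vec (R *\<^sub>v v)) + 2 * 1 = card (supp_vec v) + 4"
    by (rule orth_mat_shift_weight[OF Suc.prems(1)]) (use Suc.prems(2-4) in simp_all)
  then obtain R1 where R1: "orth_mat r R1" "card (supp_vec (R1 *\<^sub>v v)) + 2 = card (supp_vec v) + 4"
    by auto
  have "R1 *\<^sub>v v \<in> carrier_vec r" using orth_mat_carrier[OF R1(1)] Suc.prems(1) by simp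
  moreover have "card (supp_vec (R1 *\<^sub>v v)) + 2 * m = k" "1 \<le> card (supp_vec (R1 *\<^sub>v v))"
    using R1(2) Suc.prems(2) by simp_all
  ultimately obtain R2 where "orth_mat r R2" "card (supp_vec (R2 *\<^sub>v (R1 *\<^sub>v v))) = k"
    using Suc.IH Suc.prems(3) by blast
  thus ?case by (rule orth_mat_mult_vec_compose[OF R1(1) Suc.prems(1)])
qed

lemma orth_mat_reach_weight:
  fixes v :: "bit vec"
  assumes v: "v \<in> carrier_vec r" "even (card (supp_vec v))" "2 \<le> card (supp_vec v)"
    "card (supp_vec v) < r" and k: "even k" "2 \<le> k" "k < r"
  shows "\<exists>R. orth_mat r R \<and> card (supp_vec (R *\<^sub>v v)) = k"
proof (cases "k \<le> card (supp_vec v)")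
  case True
  hence "\<exists>m. card (supp_vec v) = k + 2 * m" using v(2) k(1) by presburger
  then obtain m where "card (supp_vec v) = k + 2 * m" ..
  thus ?thesis using orth_mat_lower_weight v k by simp
next
  case False
  hence "\<exists>m. card (supp_vec v) + 2 * m = k" using v(2) k(1) by presburger
  then obtain m where "card (supp_vec v) + 2 * m = k" ..
  thus ?thesis using orth_mat_raise_weight v k by simp
qed


lemma permutes_onto_subset:
  assumes S: "S \<subseteq> {..<r}" "card S = k"
  shows "\<exists>p. p permutes {..<r} \<and> p ` {..<k} = S"
proof -
  have k: "k \<le> r" using card_mono[OF finite_lessThan S(1)] S(2) by simp
  have "finite S" using S(1) finite_subset by blast
  then obtain f where f: "bij_betw f {..<k} S"
    using finite_same_card_bij[of "{..<k}" S] S(2) by auto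
  have "card ({..<r} - {..<k}) = card ({..<r} - S)"
    using S k \<open>finite S\<close> by (simp add: card_Diff_subset)
  then obtain g where g: "bij_betw g ({..<r} - {..<k}) ({..<r} - S)"
    using finite_same_card_bij[of "{..<r} - {..<k}" "{..<r} - S"] by auto
  define p where "p i = (if i < k then f i else if i < r then g i else i)" for i
  have "bij_betw p {..<k} S" using f by (rule bij_betw_cong[THEN iffD1, rotated]) (simp add: p_def)
  moreover have "bij_betw p ({..<r} - {..<k}) ({..<r} - S)"
    using g by (rule bij_betw_cong[THEN iffD1, rotated]) (simp add: p_def)
  ultimately have "bij_betw p ({..<k} \<union> ({..<r} - {..<k})) (S \<union> ({..<r} - S))"
    by (rule bij_betw_combine) auto
  moreover have "{..<k} \<union> ({..<r} - {..<k}) = {..<r}" "S \<union> ({..<r} - S) = {..<r}" using k S by auto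
  ultimately have "p permutes {..<r}" by (intro bij_imp_permutes) (auto simp: p_def)
  moreover have "p ` {..<k} = S" using \<open>bij_betw p {..<k} S\<close> by (simp add: bij_betw_def)
  ultimately show ?thesis by blast
qed

lemma perm_mat_mult_indicator_vec:
  assumes p: "p permutes {..<r}" and F: "F \<subseteq> {..<r}"
  shows "mat r r (\<lambda>(i, j). if i = p j then 1 else 0) *\<^sub>v indicator_vec r F
    = (indicator_vec r (p ` F) :: 'a::semiring_1 vec)"
proof (rule eq_vecI)
  fix i assume "i < dim_vec (indicator_vec r (p ` F) :: 'a vec)"
  hence i: "i < r" by simp
  have ip: "inv_into UNIV p i < r" using permutes_in_image[OF permutes_inv[OF p]] i by simp
  have eq: "(i = p j) \<longleftrightarrow> (j = inv_into UNIV p i)" for j using permutes_inverses[OF p] by metis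
  have "(mat r r (\<lambda>(i, j). if i = p j then 1 else 0) *\<^sub>v indicator_vec r F) $ i
      = (\<Sum>j<r. (if i = p j then 1 else 0) * (if j \<in> F then 1 else (0 :: 'a)))"
    using i by (simp add: scalar_prod_def lessThan_atLeast0)
  also have "\<dots> = (\<Sum>j<r. if j = inv_into UNIV p i then (if j \<in> F then 1 else 0) else 0)"
    by (rule sum.cong) (auto simp: eq)
  also have "\<dots> = (if inv_into UNIV p i \<in> F then 1 else 0)" using ip by simp
  also have "(inv_into UNIV p i \<in> F) \<longleftrightarrow> i \<in> p ` F" using permutes_inverses[OF p] by (metis image_iff)
  also have "(if i \<in> p ` F then 1 else 0) = (indicator_vec r (p ` F) $ i :: 'a)" using i by simp
  finally show "(mat r r (\<lambda>(i, j). if i = p j then 1 else 0) *\<^sub>v indicator_vec r F) $ i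
      = (indicator_vec r (p ` F) $ i :: 'a)" .
qed simp

lemma J_block_eq_outer_mat: "k \<le> r \<Longrightarrow> J_block r k = outer_mat (indicator_vec r {..<k})"
  by (rule eq_matI) (auto simp: J_block_def)

lemma perm_mat_congruence_J_block:
  assumes p: "p permutes {..<r}" and k: "k \<le> r"
    and Q: "Q = mat r r (\<lambda>(i, j). if i = p j then 1 else 0)"
  shows "Q * J_block r k * transpose_mat Q = outer_mat (indicator_vec r (p ` {..<k}))"
proof -
  have Qc: "Q \<in> carrier_mat r r" by (simp add: Q)
  have "Q * J_block r k * transpose_mat Q
      = transpose_mat (transpose_mat Q) * outer_mat (indicator_vec r {..<k}) * transpose_mat Q"
    using J_block_eq_outer_mat[OF k] by simp
  also have "\<dots> = outer_mat (Q *\<^sub>v indicator_vec r {..<k})"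
    using outer_mat_congruence[of "transpose_mat Q" r "indicator_vec r {..<k}"] Qc by simp
  also have "Q *\<^sub>v indicator_vec r {..<k} = indicator_vec r (p ` {..<k})"
    unfolding Q using perm_mat_mult_indicator_vec[OF p, of "{..<k}", where 'a = bit] k by simp
  finally show ?thesis .
qed

section \<open>Gram matrices of families with the same \<open>\<Sum> x\<^sub>i x\<^sub>i\<^sup>T\<close>\<close>

lemma transpose_gram:
  assumes A: "A \<in> SGL n" and x: "\<forall>i<r. x i \<in> carrier_vec n"
  shows "transpose_mat (gram n A r x) = gram n A r x"
proof (rule eq_matI)
  fix i j assume "i < dim_row (gram n A r x)" "j < dim_col (gram n A r x)"
  hence ij: "i < r" "j < r" by (simp_all add: gram_def)
  have B: "inv_of n A \<in> carrier_mat n n" "transpose_mat (inv_of n A) = inv_of n A"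
    using inv_of_SGL[OF A] by simp_all
  have "x j \<bullet> (inv_of n A *\<^sub>v x i) = (inv_of n A *\<^sub>v x j) \<bullet> x i"
    using transpose_vec_mult_scalar[OF B(1), of "x i" "x j"] B(2) x ij by simp
  also have "\<dots> = x i \<bullet> (inv_of n A *\<^sub>v x j)"
    using comm_scalar_prod[of "inv_of n A *\<^sub>v x j" n "x i"] B(1) x ij by simp
  finally show "transpose_mat (gram n A r x) $$ (i, j) = gram n A r x $$ (i, j)"
    using ij by (simp add: gram_def)
qed (simp_all add: gram_def)

lemma gram_congruence:
  assumes A: "A \<in> SGL n" and x: "\<forall>i<r. x i \<in> carrier_vec n" and y: "\<forall>i<r. y i \<in> carrier_vec n"
    and P: "P \<in> carrier_mat r r" and XP: "family_mat n r y = family_mat n r x * P"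
  shows "gram n A r y = transpose_mat P * gram n A r x * P"
  using gram_eq_family_mat[OF y A] gram_eq_family_mat[OF x A] XP
    transpose_mult_congruence[OF family_mat_carrier[of n r x] P inv_of_SGL(1)[OF A]] by simp

lemma gram_orth_congruent_of_outer_sum_eq:
  assumes A: "A \<in> SGL n" and x: "lin_indep_family n r x"
    and y: "\<forall>i<r. y i \<in> carrier_vec n" "outer_sum n r x = outer_sum n r y"
  shows "\<exists>P. orth_mat r P \<and> gram n A r y = transpose_mat P * gram n A r x * P"
proof -
  obtain L where L: "L \<in> carrier_mat r n" "L * family_mat n r x = 1\<^sub>m r"
    using lin_indep_family_left_inverse[OF x] by blast
  obtain P where P: "orth_mat r P" "family_mat n r y = family_mat n r x * P"
    using mult_transpose_eq_imp_orth_factor[OF family_mat_carrier family_mat_carrier[of n r y] L] y(2)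
    by (auto simp: outer_sum_eq_family_mat)
  have "\<forall>i<r. x i \<in> carrier_vec n" using x by (simp add: lin_indep_family_def)
  thus ?thesis using gram_congruence[OF A _ y(1) orth_mat_carrier[OF P(1)] P(2)] P(1) by blast
qed

lemma orth_mat_family_invariants:
  assumes A: "A \<in> SGL n" and x: "lin_indep_family n r x" and P: "orth_mat r P"
  defines "y \<equiv> col (family_mat n r x * P)"
  shows "lin_indep_family n r y" "outer_sum n r y = outer_sum n r x" "vec_sum n r y = vec_sum n r x"
    "gram n A r y = transpose_mat P * gram n A r x * P"
proof -
  define X where "X = family_mat n r x"
  have X: "X \<in> carrier_mat n r" by (simp add: X_def)
  have Pc: "P \<in> carrier_mat r r" "P * transpose_mat P = 1\<^sub>m r" "transpose_mat P * P = 1\<^sub>m r"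
    using P by (auto simp: orth_mat_def)
  have Y: "family_mat n r y = X * P"
    unfolding y_def X_def by (rule family_mat_col, rule mult_carrier_mat[OF family_mat_carrier Pc(1)])
  have y: "\<forall>i<r. y i \<in> carrier_vec n" by (simp add: y_def col_def)
  obtain L where L: "L \<in> carrier_mat r n" "L * X = 1\<^sub>m r"
    using lin_indep_family_left_inverse[OF x] by (auto simp: X_def)
  have "(transpose_mat P * L) * (X * P) = transpose_mat P * ((L * X) * P)"
    using Pc(1) L(1) X
    by (simp add: assoc_mult_mat[of "transpose_mat P" r r L n "X * P" r] assoc_mult_mat[of L r n X r P r])
  hence "(transpose_mat P * L) * (X * P) = 1\<^sub>m r" using Pc L(2) by simp
  moreover have "transpose_mat P * L \<in> carrier_mat r n" using Pc(1) L(1) by simp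
  ultimately show "lin_indep_family n r y"
    unfolding y_def X_def[symmetric]
    using lin_indep_family_of_left_inverse[OF mult_carrier_mat[OF X Pc(1)]] by blast
  have "outer_sum n r y = X * (P * 1\<^sub>m r * transpose_mat P) * transpose_mat X"
    using mult_congruence_assoc[OF X Pc(1) one_carrier_mat] Y Pc(1) X
    by (simp add: outer_sum_eq_family_mat)
  thus "outer_sum n r y = outer_sum n r x" using Pc X by (simp add: outer_sum_eq_family_mat X_def)
  have "vec_sum n r y = X *\<^sub>v (P *\<^sub>v indicator_vec r {..<r})"
    using X Pc(1) by (simp add: vec_sum_eq_family_mat Y)
  thus "vec_sum n r y = vec_sum n r x"
    using bit_orth_mat_mult_ones[OF P] by (simp add: vec_sum_eq_family_mat X_def)
  show "gram n A r y = transpose_mat P * gram n A r x * P"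
    using gram_congruence[OF A _ y Pc(1) Y[unfolded X_def]] x by (simp add: lin_indep_family_def)
qed

lemma orth_congruence_preserves_gram_conditions:
  fixes G :: "bit mat"
  assumes P: "orth_mat r P" and G: "G \<in> carrier_mat r r" "transpose_mat G = G"
    and rank: "mat_rank G = 1" and trace: "mat_trace G = 0"
    and zero_entry: "\<exists>i<r. \<exists>j<r. G $$ (i, j) = 0"
  shows "mat_rank (transpose_mat P * G * P) = 1 \<and> mat_trace (transpose_mat P * G * P) = 0
    \<and> (\<exists>i<r. \<exists>j<r. (transpose_mat P * G * P) $$ (i, j) = 0)"
proof -
  obtain v where v: "v \<in> carrier_vec r" "v \<noteq> 0\<^sub>v r" "G = outer_mat v"
    using bit_rank_one_symmetric_eq_outer_mat[OF G rank] by blast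
  have Pc: "P \<in> carrier_mat r r" "P * transpose_mat P = 1\<^sub>m r" using P by (auto simp: orth_mat_def)
  define u where "u = transpose_mat P *\<^sub>v v"
  have u: "u \<in> carrier_vec r" using Pc v by (simp add: u_def)
  have G': "transpose_mat P * G * P = outer_mat u"
    using outer_mat_congruence[OF Pc(1) v(1)] v(3) by (simp add: u_def)
  have Pu: "P *\<^sub>v u = v" using Pc v(1) by (simp add: u_def flip: assoc_mult_mat_vec)
  have "u \<noteq> 0\<^sub>v r" using Pu v(2) Pc(1) by auto
  moreover have "u \<bullet> u = v \<bullet> v"
    using orth_mat_scalar_prod_self[OF orth_mat_transpose[OF P] v(1)] by (simp add: u_def)
  moreover have "v \<noteq> indicator_vec r {..<r}"
    using zero_entry v(3) bit_outer_mat_zero_entry_iff[OF v(1)] by simp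
  hence "u \<noteq> indicator_vec r {..<r}" using Pu bit_orth_mat_mult_ones[OF P] by auto
  ultimately show ?thesis
    using G' trace v(3) rank_outer_mat[OF u] bit_outer_mat_zero_entry_iff[OF u]
    by (simp add: trace_outer_mat)
qed

lemma bit_outer_mat_weight_bounds:
  fixes v :: "bit vec"
  assumes v: "v \<in> carrier_vec r" "v \<noteq> 0\<^sub>v r"
    and trace: "mat_trace (outer_mat v) = 0" and zero_entry: "\<exists>i<r. \<exists>j<r. outer_mat v $$ (i, j) = 0"
  shows "even (card (supp_vec v)) \<and> 2 \<le> card (supp_vec v) \<and> card (supp_vec v) < r"
proof -
  have "even (card (supp_vec v))"
    using trace bit_scalar_prod_self[OF v(1)] by (simp add: trace_outer_mat of_nat_bit split: if_splits)
  moreover have "card (supp_vec v) \<noteq> 0"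
  proof
    assume "card (supp_vec v) = 0"
    hence "v = indicator_vec r {}" using indicator_vec_supp_vec[OF v(1)] by simp
    with v(2) show False by (auto simp: indicator_vec_def zero_vec_def)
  qed
  moreover have "card (supp_vec v) < r"
    using zero_entry bit_outer_mat_zero_entry_iff[OF v(1)] bit_card_supp_vec_less_iff[OF v(1)] by simp
  ultimately show ?thesis by presburger
qed

lemma exists_family_with_gram_J_block:
  assumes A: "A \<in> SGL n" and x: "lin_indep_family n r x"
    and v: "v \<in> carrier_vec r" "gram n A r x = outer_mat v"
    and R: "orth_mat r R" "card (supp_vec (R *\<^sub>v v)) = k"
  shows "\<exists>y Q. lin_indep_family n r y \<and> Q \<in> carrier_mat r r \<and> permutation_mat r Q \<and>
    outer_sum n r x = outer_sum n r y \<and> vec_sum n r x = vec_sum n r y \<and>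
    gram n A r y = Q * J_block r k * transpose_mat Q"
proof -
  define u where "u = R *\<^sub>v v"
  have Rc: "R \<in> carrier_mat r r" using orth_mat_carrier[OF R(1)] .
  have u: "u \<in> carrier_vec r" "supp_vec u \<subseteq> {..<r}"
    using Rc v(1) supp_vec_subset[of u] by (simp_all add: u_def)
  obtain p where p: "p permutes {..<r}" "p ` {..<k} = supp_vec u"
    using permutes_onto_subset[OF u(2)] R(2) by (auto simp: u_def)
  have k: "k \<le> r" using card_mono[OF finite_lessThan u(2)] R(2) by (simp add: u_def)
  define Q where "Q = mat r r (\<lambda>(i, j). if i = p j then 1 else (0 :: bit))"
  have Q: "Q \<in> carrier_mat r r" "permutation_mat r Q"
    using p(1) by (auto simp: Q_def permutation_mat_def)
  have "Q * J_block r k * transpose_mat Q = outer_mat u"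
    using perm_mat_congruence_J_block[OF p(1) k Q_def] p(2) indicator_vec_supp_vec[OF u(1)] by simp
  moreover have "transpose_mat (transpose_mat R) * outer_mat v * transpose_mat R = outer_mat u"
    using outer_mat_congruence[of "transpose_mat R" r v] Rc v(1) by (simp add: u_def)
  moreover define y where "y = col (family_mat n r x * transpose_mat R)"
  note invariants = orth_mat_family_invariants[OF A x orth_mat_transpose[OF R(1)], folded y_def]
  ultimately have "gram n A r y = Q * J_block r k * transpose_mat Q" using invariants(4) v(2) by simp
  thus ?thesis using invariants(1-3) Q by (intro exI[of _ y] exI[of _ Q]) simp
qed

theorem lemma4p9:
  fixes n r :: nat and A :: "bit mat" and x :: "nat \<Rightarrow> bit vec"
  assumes A: "A \<in> SGL n"
    and x_indep: "lin_indep_family n r x"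
    and r: "2 \<le> r" "r \<le> n"
    and rank1: "mat_rank (gram n A r x) = 1"
    and tr0: "mat_trace (gram n A r x) = 0"
    and zero_entry: "\<exists>i<r. \<exists>j<r. gram n A r x $$ (i,j) = 0"
  shows "(\<forall>k. even k \<and> 2 \<le> k \<and> k \<le> r - 1 \<longrightarrow>
            (\<exists>y Q. lin_indep_family n r y \<and> Q \<in> carrier_mat r r \<and> permutation_mat r Q \<and>
               outer_sum n r x = outer_sum n r y \<and> vec_sum n r x = vec_sum n r y \<and>
               gram n A r y = Q * J_block r k * transpose_mat Q))
       \<and> (\<forall>y. (\<forall>i<r. y i \<in> carrier_vec n) \<and> outer_sum n r x = outer_sum n r y \<longrightarrow>
            mat_rank (gram n A r y) = 1 \<and> mat_trace (gram n A r y) = 0 \<and>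
            (\<exists>i'<r. \<exists>j'<r. gram n A r y $$ (i',j') = 0))"
proof -
  have x: "\<forall>i<r. x i \<in> carrier_vec n" using x_indep by (simp add: lin_indep_family_def)
  have G: "gram n A r x \<in> carrier_mat r r" "transpose_mat (gram n A r x) = gram n A r x"
    using transpose_gram[OF A x] by (simp_all add: gram_def)
  obtain v where v: "v \<in> carrier_vec r" "v \<noteq> 0\<^sub>v r" "gram n A r x = outer_mat v"
    using bit_rank_one_symmetric_eq_outer_mat[OF G rank1] by blast
  have weight: "even (card (supp_vec v))" "2 \<le> card (supp_vec v)" "card (supp_vec v) < r"
    using bit_outer_mat_weight_bounds[OF v(1,2)] tr0 zero_entry v(3) by simp_all
  show ?thesis
  proof (rule conjI; intro allI impI)
    fix k assume k: "even k \<and> 2 \<le> k \<and> k \<le> r - 1"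
    hence "k < r" using r by linarith
    then obtain R where "orth_mat r R" "card (supp_vec (R *\<^sub>v v)) = k"
      using orth_mat_reach_weight[OF v(1) weight] k by blast
    thus "\<exists>y Q. lin_indep_family n r y \<and> Q \<in> carrier_mat r r \<and> permutation_mat r Q \<and>
        outer_sum n r x = outer_sum n r y \<and> vec_sum n r x = vec_sum n r y \<and>
        gram n A r y = Q * J_block r k * transpose_mat Q"
      by (rule exists_family_with_gram_J_block[OF A x_indep v(1,3)])
  next
    fix y assume "(\<forall>i<r. y i \<in> carrier_vec n) \<and> outer_sum n r x = outer_sum n r y"
    then obtain P where "orth_mat r P" "gram n A r y = transpose_mat P * gram n A r x * P"
      using gram_orth_congruent_of_outer_sum_eq[OF A x_indep] by blast
    thus "mat_rank (gram n A r y) = 1 \<and> mat_trace (gram n A r y) = 0 \<and>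
        (\<exists>i'<r. \<exists>j'<r. gram n A r y $$ (i', j') = 0)"
      using orth_congruence_preserves_gram_conditions[OF _ G rank1 tr0 zero_entry] by simp
  qed
qed

end
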